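(* Let $\|\cdot\|_{Lo}$ be the Lorentz norm on $\mathbb{R}^p$ ($p\ge2$), with allowed sets all $S\subset\{1,\dots,p\}$ containing $p$ and associated norms $\Omega^{S^c}$ as in the context. Fix $J\subset\{1,\dots,p\}$ and let $g$ be the gauge norm described in the context. Then $g(\beta)=\|\beta\|_1$ for all $\beta\in\mathbb{R}^p$.
   Context: The Lorentz cone is $\mathcal{A}:=\{a\in\mathbb{R}^p: a_j>0\ \forall j,\ a_p\ge\|(a_1,\dots,a_{p-1})\|_2\}$ and $\|\beta\|_{Lo}:=\inf_{a\in\mathcal{A}}\frac12\sum_{i=1}^p\big(\beta_i^2/a_i+a_i\big)$. For $S\ni p$, $\mathcal{A}_{S^c}:=\{(a_j)_{j\in S^c}:a\in\mathcal{A}\}$, $\Omega^{S^c}(\beta_{S^c}):=\inf_{a\in\mathcal{A}_{S^c}}\frac12\sum_{j\in S^c}\big(\beta_j^2/a_j+a_j\big)$, and $\Upsilon_S(\beta):=\|\beta_S\|_{Lo}+\Omega^{S^c}(\beta_{S^c})$, where $\beta_S$ has entries $\beta_j1\{j\in S\}$. Let $\beta_{f(J)}:=\beta_J-\beta_{J^{c}}$, $\mathrm{flip}_J(B):=\{\beta_{f(J)}:\beta\in B\}$, $\overline{B}:=\bigcup_{S\text{ allowed}}\{\beta:\Upsilon_S(\beta)\le1\}$, $B_g:=\mathrm{Conv}(\overline{B}\cup\mathrm{flip}_J(\overline{B}))$, and $g(x):=\inf\{t>0:x\in tB_g\}$. *)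

theory Defs
  imports "HOL-Analysis.Analysis"
begin

(* Vectors of R^p are represented as functions nat => real, indices 1..p, zero outside. *)
definition vecs :: "nat \<Rightarrow> (nat \<Rightarrow> real) set" where
  "vecs p = {\<beta>. \<forall>j. j \<notin> {1..p} \<longrightarrow> \<beta> j = 0}"

definition lorentz_cone :: "nat \<Rightarrow> (nat \<Rightarrow> real) set" where
  "lorentz_cone p = {a. (\<forall>j\<in>{1..p}. a j > 0) \<and> a p \<ge> sqrt (\<Sum>j=1..p-1. (a j)^2)}"

definition lo_norm :: "nat \<Rightarrow> (nat \<Rightarrow> real) \<Rightarrow> real" where
  "lo_norm p \<beta> = Inf ((\<lambda>a. (1/2) * (\<Sum>i=1..p. (\<beta> i)^2 / a i + a i)) ` lorentz_cone p)"

(* Omega^{S^c}: infimum over the projection A_{S^c} of the cone; written as an inf over a in A *)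
definition omega_comp :: "nat \<Rightarrow> nat set \<Rightarrow> (nat \<Rightarrow> real) \<Rightarrow> real" where
  "omega_comp p S \<beta> = Inf ((\<lambda>a. (1/2) * (\<Sum>j\<in>{1..p} - S. (\<beta> j)^2 / a j + a j)) ` lorentz_cone p)"

definition restr :: "nat set \<Rightarrow> (nat \<Rightarrow> real) \<Rightarrow> (nat \<Rightarrow> real)" where
  "restr S \<beta> = (\<lambda>j. if j \<in> S then \<beta> j else 0)"

definition upsilon :: "nat \<Rightarrow> nat set \<Rightarrow> (nat \<Rightarrow> real) \<Rightarrow> real" where
  "upsilon p S \<beta> = lo_norm p (restr S \<beta>) + omega_comp p S (restr ({1..p} - S) \<beta>)"

definition allowed :: "nat \<Rightarrow> nat set \<Rightarrow> bool" where
  "allowed p S \<longleftrightarrow> S \<subseteq> {1..p} \<and> p \<in> S"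

definition flip :: "nat \<Rightarrow> nat set \<Rightarrow> (nat \<Rightarrow> real) \<Rightarrow> (nat \<Rightarrow> real)" where
  "flip p J \<beta> = (\<lambda>j. restr J \<beta> j - restr ({1..p} - J) \<beta> j)"

definition Bbar :: "nat \<Rightarrow> (nat \<Rightarrow> real) set" where
  "Bbar p = (\<Union>S\<in>{S. allowed p S}. {\<beta>\<in>vecs p. upsilon p S \<beta> \<le> 1})"

definition fconvex :: "(nat \<Rightarrow> real) set \<Rightarrow> bool" where
  "fconvex C \<longleftrightarrow> (\<forall>x\<in>C. \<forall>y\<in>C. \<forall>u::real. 0 \<le> u \<and> u \<le> 1 \<longrightarrow>
      (\<lambda>j. u * x j + (1 - u) * y j) \<in> C)"

definition Bg :: "nat \<Rightarrow> nat set \<Rightarrow> (nat \<Rightarrow> real) set" where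
  "Bg p J = fconvex hull (Bbar p \<union> flip p J ` Bbar p)"

definition gauge_g :: "nat \<Rightarrow> nat set \<Rightarrow> (nat \<Rightarrow> real) \<Rightarrow> real" where
  "gauge_g p J x = Inf {t. t > 0 \<and> x \<in> (\<lambda>y j. t * y j) ` Bg p J}"

end

theory Submission
  imports Defs
begin

text \<open>Each summand of the variational objective dominates the corresponding \<open>\<bar>\<beta>\<^sub>j\<bar>\<close>
  (AM-GM), so \<open>\<Upsilon>\<^sub>S\<close> dominates the \<open>\<ell>\<^sub>1\<close>-norm and the unit balls of all \<open>\<Upsilon>\<^sub>S\<close>, as well as
  their sign flips, lie in the \<open>\<ell>\<^sub>1\<close>-ball. Conversely, for \<open>S = {p}\<close> the choice
  \<open>a\<^sub>j = \<bar>\<beta>\<^sub>j\<bar> + \<epsilon>\<close> (with \<open>a\<^sub>p\<close> enlarged to stay in the cone, which costs nothing since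
  \<open>\<beta>\<^sub>p\<close> does not enter \<open>\<Omega>\<^sup>S\<^sup>c\<close>) shows \<open>\<Upsilon>\<^sub>{\<^sub>p\<^sub>} \<le> \<parallel>\<cdot>\<parallel>\<^sub>1\<close>. Hence \<open>B\<^sub>g\<close> is exactly the
  \<open>\<ell>\<^sub>1\<close>-ball and \<open>g\<close> is its gauge.\<close>

definition l1_ball :: "nat \<Rightarrow> (nat \<Rightarrow> real) set" where
  "l1_ball p = {y \<in> vecs p. (\<Sum>j=1..p. \<bar>y j\<bar>) \<le> 1}"

lemma lorentz_cone_memI:
  assumes "\<And>j. j \<in> {1..q} \<Longrightarrow> Y j > 0" and "X > 0" and "X \<ge> (\<Sum>j=1..q. Y j)"
  shows "(\<lambda>j. if j = Suc q then X else Y j) \<in> lorentz_cone (Suc q)"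
proof -
  have "sqrt (\<Sum>j=1..q. (Y j)^2) \<le> (\<Sum>j=1..q. Y j)"
    using L2_set_le_sum[of "{1..q}" Y] assms(1) unfolding L2_set_def by force
  moreover have "(\<Sum>j=1..q. ((\<lambda>j. if j = Suc q then X else Y j) j)^2) = (\<Sum>j=1..q. (Y j)^2)"
    by (intro sum.cong) auto
  ultimately show ?thesis
    unfolding lorentz_cone_def using assms by auto
qed

lemma lorentz_cone_nonempty: "p \<ge> 1 \<Longrightarrow> lorentz_cone p \<noteq> {}"
  using lorentz_cone_memI[of q "\<lambda>_. 1" "real q + 1" for q] by (cases p) auto

lemma abs_le_half_quadratic_div:
  fixes a b :: real assumes "a > 0" shows "\<bar>b\<bar> \<le> (1/2) * (b^2 / a + a)"
proof -
  have "0 \<le> (\<bar>b\<bar> - a)^2 / a" using assms by simp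
  also have "(\<bar>b\<bar> - a)^2 / a = b^2/a + a - 2*\<bar>b\<bar>"
    using assms by (simp add: field_simps power2_eq_square)
  finally show ?thesis by simp
qed

lemma power2_div_abs_add_le:
  fixes b c :: real assumes "c > 0" shows "b^2 / (\<bar>b\<bar> + c) \<le> \<bar>b\<bar>"
proof -
  have "b^2 \<le> \<bar>b\<bar> * (\<bar>b\<bar> + c)" using assms
    by (simp add: power2_eq_square algebra_simps)
  then show ?thesis using assms by (simp add: divide_le_eq)
qed

lemma sum_abs_le_objective:
  assumes "a \<in> lorentz_cone p" "A \<subseteq> {1..p}"
  shows "(\<Sum>j\<in>A. \<bar>\<gamma> j\<bar>) \<le> (1/2) * (\<Sum>j\<in>A. (\<gamma> j)^2 / a j + a j)"
proof -
  have "(\<Sum>j\<in>A. \<bar>\<gamma> j\<bar>) \<le> (\<Sum>j\<in>A. (1/2) * ((\<gamma> j)^2 / a j + a j))"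
    using assms by (intro sum_mono abs_le_half_quadratic_div) (auto simp: lorentz_cone_def)
  then show ?thesis by (simp add: sum_distrib_left)
qed

lemma Inf_objective_ge:
  assumes "p \<ge> 1" "A \<subseteq> {1..p}"
  shows "(\<Sum>j\<in>A. \<bar>\<gamma> j\<bar>) \<le> Inf ((\<lambda>a. (1/2) * (\<Sum>j\<in>A. (\<gamma> j)^2 / a j + a j)) ` lorentz_cone p)"
  using lorentz_cone_nonempty[OF assms(1)] sum_abs_le_objective[OF _ assms(2)]
  by (intro cInf_greatest) auto

lemma Inf_objective_le:
  assumes "a \<in> lorentz_cone p" "A \<subseteq> {1..p}"
  shows "Inf ((\<lambda>a. (1/2) * (\<Sum>j\<in>A. (\<gamma> j)^2 / a j + a j)) ` lorentz_cone p)
           \<le> (1/2) * (\<Sum>j\<in>A. (\<gamma> j)^2 / a j + a j)"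
  using assms sum_abs_le_objective[OF _ assms(2)] by (intro cInf_lower bdd_belowI2) auto

lemma sum_abs_le_upsilon:
  assumes "p \<ge> 1" shows "(\<Sum>j=1..p. \<bar>\<beta> j\<bar>) \<le> upsilon p S \<beta>"
proof -
  have "(\<Sum>j=1..p. \<bar>\<beta> j\<bar>) = (\<Sum>j=1..p. \<bar>restr S \<beta> j\<bar>) + (\<Sum>j\<in>{1..p}-S. \<bar>restr ({1..p}-S) \<beta> j\<bar>)"
    using sum.Int_Diff[of "{1..p}" "\<lambda>j. \<bar>\<beta> j\<bar>" S] unfolding restr_def
    by (simp add: if_distrib sum.If_cases Int_commute Diff_eq cong: if_cong)
  then show ?thesis
    unfolding upsilon_def lo_norm_def omega_comp_def
    using Inf_objective_ge[OF assms order_refl, of "restr S \<beta>"]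
      Inf_objective_ge[OF assms, of "{1..p}-S" "restr ({1..p}-S) \<beta>"]
    by fastforce
qed

lemma lo_norm_restr_last_le:
  "lo_norm (Suc q) (restr {Suc q} y) \<le> \<bar>y (Suc q)\<bar>"
proof (rule field_le_epsilon)
  fix e :: real assume e: "e > 0"
  define p where "p = Suc q"
  define d where "d = e / (real q + 1)"
  have d: "d > 0" and qd: "real q * d \<le> e"
    using e by (auto simp: d_def field_simps)
  define a where "a = (\<lambda>j. if j = p then \<bar>y p\<bar> + e else d)"
  have a: "a \<in> lorentz_cone p"
    unfolding a_def p_def using d e qd by (intro lorentz_cone_memI) auto
  have "(\<Sum>i=1..p. (restr {p} y i)^2 / a i + a i)
      = real q * d + ((y p)^2 / (\<bar>y p\<bar> + e) + (\<bar>y p\<bar> + e))"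
    by (simp add: p_def restr_def a_def)
  also have "\<dots> \<le> 2 * \<bar>y p\<bar> + 2 * e"
    using qd power2_div_abs_add_le[OF e, of "y p"] by linarith
  finally show "lo_norm p (restr {p} y) \<le> \<bar>y p\<bar> + e"
    unfolding lo_norm_def using Inf_objective_le[OF a order_refl, of "restr {p} y"] by linarith
qed

lemma omega_comp_last_le:
  "omega_comp (Suc q) {Suc q} (restr ({1..Suc q} - {Suc q}) y) \<le> (\<Sum>j=1..q. \<bar>y j\<bar>)"
proof (rule field_le_epsilon)
  fix e :: real assume e: "e > 0"
  define p where "p = Suc q"
  define d where "d = e / (real q + 1)"
  have d: "d > 0" and qd: "real q * d \<le> e"
    using e by (auto simp: d_def field_simps)
  have D: "{1..p} - {p} = {1..q}" by (auto simp: p_def)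
  define a where "a = (\<lambda>j. if j = p then (\<Sum>j=1..q. \<bar>y j\<bar> + d) + 1 else \<bar>y j\<bar> + d)"
  have "0 \<le> (\<Sum>j=1..q. \<bar>y j\<bar> + d)" using d by (intro sum_nonneg) auto
  then have a: "a \<in> lorentz_cone p"
    unfolding a_def p_def using d by (intro lorentz_cone_memI) auto
  have "(\<Sum>j\<in>{1..p}-{p}. (restr ({1..p} - {p}) y j)^2 / a j + a j)
      = (\<Sum>j=1..q. (y j)^2 / (\<bar>y j\<bar> + d) + (\<bar>y j\<bar> + d))"
    unfolding D by (intro sum.cong) (auto simp: p_def restr_def a_def)
  also have "\<dots> \<le> (\<Sum>j=1..q. \<bar>y j\<bar> + (\<bar>y j\<bar> + d))"
    using power2_div_abs_add_le[OF d] by (intro sum_mono) auto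
  also have "\<dots> = 2 * (\<Sum>j=1..q. \<bar>y j\<bar>) + real q * d"
    by (simp add: sum.distrib sum_distrib_left)
  finally show "omega_comp p {p} (restr ({1..p} - {p}) y) \<le> (\<Sum>j=1..q. \<bar>y j\<bar>) + e"
    unfolding omega_comp_def
    using Inf_objective_le[OF a Diff_subset[of _ "{p}"], of "restr ({1..p} - {p}) y"] qd e by linarith
qed

lemma upsilon_last_le: "p \<ge> 1 \<Longrightarrow> upsilon p {p} y \<le> (\<Sum>j=1..p. \<bar>y j\<bar>)"
  using lo_norm_restr_last_le[of "p - 1" y] omega_comp_last_le[of "p - 1" y]
  by (cases p) (auto simp: upsilon_def)

lemma fconvex_l1_ball: "fconvex (l1_ball p)"
  unfolding fconvex_def
proof (intro ballI allI impI)
  fix x y and u :: real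
  assume x: "x \<in> l1_ball p" and y: "y \<in> l1_ball p" and u: "0 \<le> u \<and> u \<le> 1"
  have "(\<Sum>j=1..p. \<bar>u * x j + (1 - u) * y j\<bar>) \<le> (\<Sum>j=1..p. u * \<bar>x j\<bar> + (1 - u) * \<bar>y j\<bar>)"
  proof (rule sum_mono)
    fix j
    have "\<bar>u * x j + (1 - u) * y j\<bar> \<le> \<bar>u * x j\<bar> + \<bar>(1 - u) * y j\<bar>" by (rule abs_triangle_ineq)
    then show "\<bar>u * x j + (1 - u) * y j\<bar> \<le> u * \<bar>x j\<bar> + (1 - u) * \<bar>y j\<bar>"
      using u by (simp add: abs_mult)
  qed
  also have "\<dots> = u * (\<Sum>j=1..p. \<bar>x j\<bar>) + (1 - u) * (\<Sum>j=1..p. \<bar>y j\<bar>)"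
    by (simp add: sum.distrib sum_distrib_left)
  also have "\<dots> \<le> u * 1 + (1 - u) * 1"
    using x y u by (intro add_mono mult_left_mono) (auto simp: l1_ball_def)
  finally show "(\<lambda>j. u * x j + (1 - u) * y j) \<in> l1_ball p"
    using x y by (auto simp: l1_ball_def vecs_def)
qed

text \<open>No hypothesis on \<open>J\<close> is needed: outside \<open>{1..p}\<close> a vector of \<open>vecs p\<close> vanishes anyway.\<close>

lemma flip_mem_l1_ball: "y \<in> l1_ball p \<Longrightarrow> flip p J y \<in> l1_ball p"
proof -
  assume y: "y \<in> l1_ball p"
  have "(\<Sum>j=1..p. \<bar>flip p J y j\<bar>) = (\<Sum>j=1..p. \<bar>y j\<bar>)"
    unfolding flip_def restr_def by (intro sum.cong) auto
  with y show ?thesis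
    by (auto simp: l1_ball_def vecs_def flip_def restr_def)
qed

lemma Bbar_subset_l1_ball:
  assumes "p \<ge> 1" shows "Bbar p \<subseteq> l1_ball p"
proof
  fix y assume "y \<in> Bbar p"
  then obtain S where "y \<in> vecs p" "upsilon p S y \<le> 1" unfolding Bbar_def by blast
  with sum_abs_le_upsilon[OF assms, of y S] show "y \<in> l1_ball p"
    unfolding l1_ball_def by simp
qed

lemma l1_ball_subset_Bbar:
  assumes "p \<ge> 1" shows "l1_ball p \<subseteq> Bbar p"
proof
  fix y assume y: "y \<in> l1_ball p"
  have "allowed p {p}" using assms by (simp add: allowed_def)
  moreover have "upsilon p {p} y \<le> 1"
    using y upsilon_last_le[OF assms, of y] by (simp add: l1_ball_def)
  ultimately show "y \<in> Bbar p" using y unfolding Bbar_def l1_ball_def by blast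
qed

lemma Bg_eq_l1_ball:
  assumes "p \<ge> 1" shows "Bg p J = l1_ball p"
proof
  have "flip p J ` Bbar p \<subseteq> l1_ball p"
    using Bbar_subset_l1_ball[OF assms] flip_mem_l1_ball by blast
  then show "Bg p J \<subseteq> l1_ball p"
    unfolding Bg_def using Bbar_subset_l1_ball[OF assms] fconvex_l1_ball
    by (intro hull_minimal) simp_all
  have "Bbar p \<subseteq> fconvex hull (Bbar p \<union> flip p J ` Bbar p)"
    by (rule subset_trans[OF Un_upper1 hull_subset])
  then show "l1_ball p \<subseteq> Bg p J"
    unfolding Bg_def using l1_ball_subset_Bbar[OF assms] by (rule subset_trans[rotated])
qed

lemma mem_scaled_l1_ball_iff:
  assumes "t > 0" "\<beta> \<in> vecs p"
  shows "\<beta> \<in> (\<lambda>y j. t * y j) ` l1_ball p \<longleftrightarrow> (\<Sum>j=1..p. \<bar>\<beta> j\<bar>) \<le> t"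
proof
  assume "\<beta> \<in> (\<lambda>y j. t * y j) ` l1_ball p"
  then obtain y where y: "y \<in> l1_ball p" and \<beta>: "\<beta> = (\<lambda>j. t * y j)" by blast
  have "(\<Sum>j=1..p. \<bar>\<beta> j\<bar>) = t * (\<Sum>j=1..p. \<bar>y j\<bar>)"
    using assms(1) by (simp add: \<beta> abs_mult sum_distrib_left)
  also have "\<dots> \<le> t" using y assms(1) by (simp add: l1_ball_def)
  finally show "(\<Sum>j=1..p. \<bar>\<beta> j\<bar>) \<le> t" .
next
  assume le: "(\<Sum>j=1..p. \<bar>\<beta> j\<bar>) \<le> t"
  have "(\<Sum>j=1..p. \<bar>\<beta> j / t\<bar>) = (\<Sum>j=1..p. \<bar>\<beta> j\<bar>) / t"
    using assms(1) by (simp add: sum_divide_distrib)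
  with le assms have "(\<lambda>j. \<beta> j / t) \<in> l1_ball p"
    by (simp add: l1_ball_def vecs_def)
  moreover have "\<beta> = (\<lambda>j. t * (\<beta> j / t))" using assms(1) by simp
  ultimately show "\<beta> \<in> (\<lambda>y j. t * y j) ` l1_ball p"
    by (intro image_eqI[where x="\<lambda>j. \<beta> j / t"])
qed

lemma Inf_pos_atLeast:
  fixes s :: real assumes "s \<ge> 0" shows "Inf {t. t > 0 \<and> s \<le> t} = s"
proof (cases "s = 0")
  case True
  then have "{t. t > 0 \<and> s \<le> t} = {0<..}" by auto
  with True show ?thesis by simp
next
  case False
  with assms have "{t. t > 0 \<and> s \<le> t} = {s..}" by auto
  then show ?thesis by simp
qed

lemma gauge_l1_ball:
  assumes "\<beta> \<in> vecs p"
  shows "Inf {t. t > 0 \<and> \<beta> \<in> (\<lambda>y j. t * y j) ` l1_ball p} = (\<Sum>j=1..p. \<bar>\<beta> j\<bar>)"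
proof -
  have "{t. t > 0 \<and> \<beta> \<in> (\<lambda>y j. t * y j) ` l1_ball p} = {t. t > 0 \<and> (\<Sum>j=1..p. \<bar>\<beta> j\<bar>) \<le> t}"
    using mem_scaled_l1_ball_iff[OF _ assms] by blast
  then show ?thesis by (simp add: Inf_pos_atLeast sum_nonneg)
qed

theorem lemma12:
  fixes p :: nat and J :: "nat set" and \<beta> :: "nat \<Rightarrow> real"
  assumes "p \<ge> 2" and "J \<subseteq> {1..p}" and "\<beta> \<in> vecs p"
  shows "gauge_g p J \<beta> = (\<Sum>j=1..p. \<bar>\<beta> j\<bar>)"
proof -
  have "Bg p J = l1_ball p" using assms(1) by (intro Bg_eq_l1_ball) simp
  then show ?thesis unfolding gauge_g_def using gauge_l1_ball[OF assms(3)] by simp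
qed

end
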